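(* Fix $V_{\sf P}\ge0$. Let ${\sf OPT}$ denote the oracle policy that knows the realization of $V_{\sf N}$ at time $0$ and at every time recommends two items of the type with the larger base utility (two niche items if $V_{\sf N}>V_{\sf P}$, two popular items otherwise). Then $$\lim_{\delta\to1}\lim_{p\to0}\frac{{\sf Util}({\sf PEAR})}{{\sf Util}({\sf OPT})}=1.$$
   Context: Model. Time $t=0,1,2,\dots$, discount factor $\delta\in[0,1)$. Two item types, popular ${\sf P}$ and niche ${\sf N}$, infinitely many items each; at each time $t$ the platform recommends a set $\pi_t$ of two fresh items of chosen types. Utility of item $i$: $u_i=V_{\tau(i)}+\epsilon_i$; outside option: $u_\emptyset=\epsilon_\emptyset$; all noises i.i.d. Gumbel with scale $1$ and mean $0$. User chooses $c_t=\arg\max_{j\in\pi_t\cup\{\emptyset\}}u_j$. $V_{\sf P}$ is a known constant; $V_{\sf N}$ is drawn once, fixed over time, independent of noise, with $\mathbb P(V_{\sf N}=(1-p)/p)=p$, $\mathbb P(V_{\sf N}=-1)=1-p$, $p\in(0,1)$. ${\sf Util}(\pi)=\sum_{t\ge0}\delta^t\mathbb E[\max_{j\in\pi_t\cup\{\emptyset\}}u_j]$ (expectation also over $V_{\sf N}$). Policy ${\sf PEAR}$: let $\rho_1=\frac{e^{(1-p)/p}}{1+e^{V_{\sf P}}+e^{(1-p)/p}}$, $\rho_2=\frac{e^{-1}}{1+e^{V_{\sf P}}+e^{-1}}$. Maintain counters $S,F$ (initially $0$) and $p_0=p$. At each time $t$: if $p_t\ge p$, recommend one popular and one niche item; if the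 niche item is chosen increment $S$, otherwise increment $F$. If $p_t<p$, recommend two popular items. Then set $p_{t+1}=\left(1+\frac{1-p}{p}\cdot\frac{\rho_2^S(1-\rho_2)^F}{\rho_1^S(1-\rho_1)^F}\right)^{-1}$. *)

theory Defs
  imports "HOL-Probability.Probability"
begin

section \<open>Gumbel noise (scale 1, mean 0, i.e. location -gamma)\<close>

definition gumbel_density :: "real \<Rightarrow> real" where
  "gumbel_density x =
     exp (- (x + euler_mascheroni)) * exp (- exp (- (x + euler_mascheroni)))"

definition gumbel :: "real measure" where
  "gumbel = density lborel (\<lambda>x. ennreal (gumbel_density x))"

definition noise :: "nat \<Rightarrow> (nat \<Rightarrow> real) measure" where
  "noise n = PiM {..<n} (\<lambda>_. gumbel)"

text \<open>A menu is the list of base utilities of the offered options,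
  including the outside option (base utility 0).
  emax: expected utility of the chosen option E[max_j (V_j + eps_j)].
  choice_prob vs j: probability that option j is chosen (the argmax).\<close>
definition emax :: "real list \<Rightarrow> real" where
  "emax vs = integral\<^sup>L (noise (length vs))
      (\<lambda>e. Max ((\<lambda>j. vs ! j + e j) ` {..<length vs}))"

definition choice_prob :: "real list \<Rightarrow> nat \<Rightarrow> real" where
  "choice_prob vs j = measure (noise (length vs))
      {e \<in> space (noise (length vs)).
         \<forall>k<length vs. k \<noteq> j \<longrightarrow> vs ! k + e k < vs ! j + e j}"

definition menu_PN :: "real \<Rightarrow> real \<Rightarrow> real list" where
  "menu_PN VP VN = [VP, VN, 0]"   \<comment> \<open>one popular, one niche; niche is index 1\<close>

definition menu_PP :: "real \<Rightarrow> real list" where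
  "menu_PP VP = [VP, VP, 0]"

definition menu_NN :: "real \<Rightarrow> real list" where
  "menu_NN VN = [VN, VN, 0]"

definition rho1 :: "real \<Rightarrow> real \<Rightarrow> real" where
  "rho1 VP p = exp ((1 - p) / p) / (1 + exp VP + exp ((1 - p) / p))"

definition rho2 :: "real \<Rightarrow> real" where
  "rho2 VP = exp (-1) / (1 + exp VP + exp (-1))"

definition post :: "real \<Rightarrow> real \<Rightarrow> nat \<Rightarrow> nat \<Rightarrow> real" where
  "post VP p S F = inverse (1 + (1 - p) / p *
      ((rho2 VP ^ S * (1 - rho2 VP) ^ F) / (rho1 VP p ^ S * (1 - rho1 VP p) ^ F)))"

definition explores :: "real \<Rightarrow> real \<Rightarrow> nat \<times> nat \<Rightarrow> bool" where
  "explores VP p sf = (post VP p (fst sf) (snd sf) \<ge> p)"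

definition pear_step :: "real \<Rightarrow> real \<Rightarrow> real \<Rightarrow> nat \<times> nat \<Rightarrow> (nat \<times> nat) pmf" where
  "pear_step VP p v sf =
     (if explores VP p sf
      then map_pmf (\<lambda>b. if b then (Suc (fst sf), snd sf) else (fst sf, Suc (snd sf)))
             (bernoulli_pmf (choice_prob (menu_PN VP v) 1))
      else return_pmf sf)"

primrec pear_state :: "real \<Rightarrow> real \<Rightarrow> real \<Rightarrow> nat \<Rightarrow> (nat \<times> nat) pmf" where
  "pear_state VP p v 0 = return_pmf (0, 0)"
| "pear_state VP p v (Suc t) = bind_pmf (pear_state VP p v t) (pear_step VP p v)"

definition pear_reward :: "real \<Rightarrow> real \<Rightarrow> real \<Rightarrow> nat \<Rightarrow> real" where
  "pear_reward VP p v t = measure_pmf.expectation (pear_state VP p v t)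
      (\<lambda>sf. if explores VP p sf then emax (menu_PN VP v) else emax (menu_PP VP))"

definition Util_PEAR :: "real \<Rightarrow> real \<Rightarrow> real \<Rightarrow> real" where
  "Util_PEAR VP p \<delta> =
     p * (\<Sum>t. \<delta> ^ t * pear_reward VP p ((1 - p) / p) t)
   + (1 - p) * (\<Sum>t. \<delta> ^ t * pear_reward VP p (-1) t)"

definition opt_menu :: "real \<Rightarrow> real \<Rightarrow> real list" where
  "opt_menu VP v = (if v > VP then menu_NN v else menu_PP VP)"

definition Util_OPT :: "real \<Rightarrow> real \<Rightarrow> real \<Rightarrow> real" where
  "Util_OPT VP p \<delta> =
     p * (\<Sum>t. \<delta> ^ t * emax (opt_menu VP ((1 - p) / p)))
   + (1 - p) * (\<Sum>t. \<delta> ^ t * emax (opt_menu VP (-1)))"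

end

theory Submission
  imports Defs "HOL-Probability.Sinc_Integral" "HOL-Real_Asymp.Real_Asymp"
begin

text \<open>As \<open>p \<rightarrow> 0\<close> the high niche value \<open>(1 - p) / p\<close> blows up, so after multiplication by its
  probability \<open>p\<close> it contributes \<open>1 / (1 - \<delta>)\<close> in the limit to both utilities, provided PEAR keeps
  exploring in the high world; it does, because the niche item is then chosen with probability
  tending to \<open>1\<close>. In the low world \<open>\<rho>\<^sub>1 \<rightarrow> 1\<close>, so the first failure already drives the posterior
  below \<open>p\<close> and PEAR explores at time \<open>t\<close> with probability exactly \<open>c\<^sup>t\<close>, where \<open>c < 1\<close> is
  the probability that the low niche item is chosen. Both utilities therefore converge; the
  exploration loss is \<open>O(1 / (1 - \<delta> c))\<close> against a total of order \<open>1 / (1 - \<delta>)\<close>, so the limit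
  ratio tends to \<open>1\<close> as \<open>\<delta> \<rightarrow> 1\<close>.\<close>

section \<open>The Gumbel distribution\<close>

definition gumbel_exponent :: "real \<Rightarrow> real" where
  "gumbel_exponent x = exp (- (x + euler_mascheroni))"

lemma gumbel_exponent_pos: "gumbel_exponent x > 0"
  by (simp add: gumbel_exponent_def)

lemma gumbel_density_eq: "gumbel_density x = gumbel_exponent x * exp (- gumbel_exponent x)"
  by (simp add: gumbel_density_def gumbel_exponent_def)

lemma gumbel_density_nonneg: "gumbel_density x \<ge> 0"
  by (simp add: gumbel_density_eq gumbel_exponent_pos less_imp_le)

lemma gumbel_exponent_has_real_derivative [derivative_intros]:
  "(gumbel_exponent has_real_derivative - gumbel_exponent x) (at x)"
  unfolding gumbel_exponent_def by (auto intro!: derivative_eq_intros)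

lemma isCont_gumbel_exponent [continuous_intros]: "isCont gumbel_exponent x"
  unfolding gumbel_exponent_def by (intro continuous_intros)

lemma gumbel_exponent_measurable [measurable]: "gumbel_exponent \<in> borel_measurable borel"
  unfolding gumbel_exponent_def by measurable

lemma gumbel_density_measurable [measurable]: "gumbel_density \<in> borel_measurable borel"
  unfolding gumbel_density_eq[abs_def] by measurable

lemma gumbel_exponent_at_top: "(gumbel_exponent \<longlongrightarrow> 0) at_top"
  unfolding gumbel_exponent_def by real_asymp

lemma gumbel_exponent_at_bot: "filterlim gumbel_exponent at_top at_bot"
  unfolding gumbel_exponent_def by real_asymp

lemma gumbel_cdf_has_real_derivative:
  "((\<lambda>x. exp (- gumbel_exponent x)) has_real_derivative gumbel_density x) (at x)"
  by (auto intro!: derivative_eq_intros simp: gumbel_density_eq)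

lemma isCont_gumbel_density: "isCont gumbel_density x"
  unfolding gumbel_density_eq[abs_def] by (intro continuous_intros)

lemma gumbel_cdf_at_bot: "((\<lambda>x. exp (- gumbel_exponent x)) \<longlongrightarrow> 0) at_bot"
  by (rule filterlim_compose[OF _ gumbel_exponent_at_bot]) real_asymp

lemma lborel_integral_FTC_nonneg:
  fixes f F :: "real \<Rightarrow> real"
  assumes "\<And>x. (F has_real_derivative f x) (at x)" "\<And>x. isCont f x" "\<And>x. 0 \<le> f x"
    and "(F \<longlongrightarrow> A) at_bot" "(F \<longlongrightarrow> B) at_top"
  shows "integrable lborel f" "integral\<^sup>L lborel f = B - A"
proof -
  have *: "set_integrable lborel (einterval (-\<infinity>) \<infinity>) f" "(LBINT x=-\<infinity>..\<infinity>. f x) = B - A"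
    by (rule interval_integral_FTC_nonneg; use assms in \<open>auto simp: ereal_tendsto_simps1\<close>)+
  show "integrable lborel f" using *(1) by (simp add: set_integrable_def)
  show "integral\<^sup>L lborel f = B - A" using *(2)
    by (simp add: interval_lebesgue_integral_def set_lebesgue_integral_def)
qed

lemma lborel_set_integral_lessThan_FTC_nonneg:
  fixes f F :: "real \<Rightarrow> real"
  assumes "\<And>x. (F has_real_derivative f x) (at x)" "\<And>x. isCont f x" "\<And>x. 0 \<le> f x"
    and "(F \<longlongrightarrow> A) at_bot"
  shows "set_integrable lborel {..<a} f"
    and "integral\<^sup>L lborel (\<lambda>x. indicator {..<a} x * f x) = F a - A"
proof -
  have "isCont F a" using assms(1) DERIV_isCont by blast
  then have left: "(F \<longlongrightarrow> F a) (at_left a)"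
    by (simp add: isCont_def filterlim_at_split)
  have *: "set_integrable lborel (einterval (-\<infinity>) (ereal a)) f"
    "(LBINT x=-\<infinity>..ereal a. f x) = F a - A"
    by (rule interval_integral_FTC_nonneg; use assms left in \<open>auto simp: ereal_tendsto_simps1\<close>)+
  show "set_integrable lborel {..<a} f" using *(1) by simp
  show "integral\<^sup>L lborel (\<lambda>x. indicator {..<a} x * f x) = F a - A" using *(2)
    by (simp add: interval_lebesgue_integral_def set_lebesgue_integral_def)
qed

lemma gumbel_density_integral:
  "integrable lborel gumbel_density" "integral\<^sup>L lborel gumbel_density = 1"
proof -
  have "((\<lambda>x. exp (- gumbel_exponent x)) \<longlongrightarrow> 1) at_top"
    using tendsto_exp[OF tendsto_minus[OF gumbel_exponent_at_top]] by simp
  then show "integrable lborel gumbel_density" "integral\<^sup>L lborel gumbel_density = 1"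
    using lborel_integral_FTC_nonneg[OF gumbel_cdf_has_real_derivative isCont_gumbel_density
        gumbel_density_nonneg gumbel_cdf_at_bot]
    by auto
qed

lemma space_gumbel [simp]: "space gumbel = UNIV"
  by (simp add: gumbel_def)

lemma sets_gumbel [simp]: "sets gumbel = sets borel"
  by (simp add: gumbel_def)

lemma prob_space_gumbel: "prob_space gumbel"
proof
  have "emeasure gumbel (space gumbel) = (\<integral>\<^sup>+ x. ennreal (gumbel_density x) \<partial>lborel)"
    by (simp add: gumbel_def emeasure_density)
  also have "\<dots> = ennreal (integral\<^sup>L lborel gumbel_density)"
    by (rule nn_integral_eq_integral) (auto simp: gumbel_density_integral gumbel_density_nonneg)
  finally show "emeasure gumbel (space gumbel) = 1" by (simp add: gumbel_density_integral)
qed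

lemma measure_gumbel_less: "measure gumbel {x. x < a} = exp (- gumbel_exponent a)"
proof -
  note FTC = lborel_set_integral_lessThan_FTC_nonneg[OF gumbel_cdf_has_real_derivative
      isCont_gumbel_density gumbel_density_nonneg gumbel_cdf_at_bot, of a]
  have "emeasure gumbel {..<a} =
      (\<integral>\<^sup>+ x. ennreal (gumbel_density x) * indicator {..<a} x \<partial>lborel)"
    by (simp add: gumbel_def emeasure_density)
  also have "\<dots> = (\<integral>\<^sup>+ x. ennreal (indicator {..<a} x * gumbel_density x) \<partial>lborel)"
    by (intro nn_integral_cong) (auto simp: indicator_def)
  also have "\<dots> = ennreal (integral\<^sup>L lborel (\<lambda>x. indicator {..<a} x * gumbel_density x))"
    by (rule nn_integral_eq_integral)
      (use FTC(1) in \<open>auto simp: set_integrable_def gumbel_density_nonneg\<close>)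
  finally show ?thesis using FTC(2) by (simp add: measure_def lessThan_def)
qed

lemma measure_gumbel_ge: "measure gumbel {x. a \<le> x} = 1 - exp (- gumbel_exponent a)"
proof -
  interpret prob_space gumbel by (rule prob_space_gumbel)
  have "{x. a \<le> x} = space gumbel - {x. x < a}" by auto
  then show ?thesis using prob_compl[of "{x. x < a}"] measure_gumbel_less by simp
qed

lemma gumbel_exponent_square_integral:
  "integrable lborel (\<lambda>x. gumbel_exponent x ^ 2 * exp (- gumbel_exponent x))"
  "integral\<^sup>L lborel (\<lambda>x. gumbel_exponent x ^ 2 * exp (- gumbel_exponent x)) = 1"
proof -
  let ?F = "\<lambda>x. (gumbel_exponent x + 1) * exp (- gumbel_exponent x)"
  have "(?F has_real_derivative gumbel_exponent x ^ 2 * exp (- gumbel_exponent x)) (at x)" for x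
    by (auto intro!: derivative_eq_intros simp: power2_eq_square algebra_simps)
  moreover have "isCont (\<lambda>x. gumbel_exponent x ^ 2 * exp (- gumbel_exponent x)) x" for x
    by (intro continuous_intros)
  moreover have "(?F \<longlongrightarrow> 0) at_bot"
    by (rule filterlim_compose[where g="\<lambda>t. (t + 1) * exp (- t)", OF _ gumbel_exponent_at_bot])
      real_asymp
  moreover have "(?F \<longlongrightarrow> 1) at_top"
    using tendsto_mult[OF tendsto_add[OF gumbel_exponent_at_top tendsto_const[of 1]]
        tendsto_exp[OF tendsto_minus[OF gumbel_exponent_at_top]]]
    by simp
  ultimately show "integrable lborel (\<lambda>x. gumbel_exponent x ^ 2 * exp (- gumbel_exponent x))"
    "integral\<^sup>L lborel (\<lambda>x. gumbel_exponent x ^ 2 * exp (- gumbel_exponent x)) = 1"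
    using lborel_integral_FTC_nonneg[of ?F] by auto
qed

lemma abs_mult_standard_gumbel_density_le:
  fixes y :: real
  shows "\<bar>y\<bar> * (exp (- y) * exp (- exp (- y)))
           \<le> exp (- y) ^ 2 * exp (- exp (- y)) + 8 * inverse (1 + y\<^sup>2)"
proof (cases "y < 0")
  case True
  have "1 + (- y) \<le> exp (- y)" by (rule exp_ge_add_one_self)
  then have "\<bar>y\<bar> \<le> exp (- y)" using True by simp
  then have "\<bar>y\<bar> * (exp (- y) * exp (- exp (- y))) \<le> exp (- y) * (exp (- y) * exp (- exp (- y)))"
    by (intro mult_right_mono) auto
  then show ?thesis by (simp add: power2_eq_square add_increasing2)
next
  case False
  then have y: "y \<ge> 0" by simp
  have "1 + y/4 \<le> exp (y/4)" by (rule exp_ge_add_one_self)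
  then have "(1 + y/4) ^ 4 \<le> exp (y/4) ^ 4" using y by (intro power_mono) auto
  also have "exp (y/4) ^ 4 = exp y" by (simp add: exp_of_nat_mult[symmetric])
  finally have exp_ge: "(1 + y/4) ^ 4 \<le> exp y" .
  have "8 * (1 + y/4) ^ 4 - y * (1 + y\<^sup>2) = 8 + 7*y + y\<^sup>2 * ((y/4 - 2)^2*(1/2) + 1)"
    by (simp add: power2_eq_square power4_eq_xxxx field_simps eval_nat_numeral)
  moreover have "y\<^sup>2 * ((y/4 - 2)^2*(1/2) + 1) \<ge> 0" by simp
  ultimately have "y * (1 + y\<^sup>2) \<le> 8 * exp y" using y exp_ge by linarith
  then have "y * exp (- y) \<le> 8 * inverse (1 + y\<^sup>2)"
    by (simp add: exp_minus field_simps add_pos_nonneg)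
  moreover have "\<bar>y\<bar> * (exp (- y) * exp (- exp (- y))) \<le> y * exp (- y)"
    using y by (simp add: mult_left_le mult_left_mono)
  moreover have "0 \<le> exp (- y) ^ 2 * exp (- exp (- y))" by simp
  ultimately show ?thesis by linarith
qed

lemma inverse_1_plus_square_shift_le:
  fixes x g :: real
  assumes "0 \<le> g" "g \<le> 1"
  shows "inverse (1 + (x + g)\<^sup>2) \<le> 3 * inverse (1 + x\<^sup>2)"
proof -
  have "x\<^sup>2 \<le> 2 * (x + g)\<^sup>2 + 2 * g\<^sup>2"
    using sum_squares_ge_zero[of "x + 2*g" 0] by (simp add: power2_eq_square algebra_simps)
  moreover have "g\<^sup>2 \<le> 1" using assms by (simp add: power_le_one)
  moreover have "0 \<le> (x + g)\<^sup>2" by simp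
  ultimately have "1 + x\<^sup>2 \<le> 3 * (1 + (x + g)\<^sup>2)" by (smt (verit))
  then show ?thesis by (simp add: field_simps add_pos_nonneg)
qed

lemma integrable_gumbel_id: "integrable gumbel (\<lambda>x. x)"
proof -
  let ?g = "euler_mascheroni :: real"
  have g: "0 \<le> ?g" "?g \<le> 1"
    using euler_mascheroni_pos euler_mascheroni_less_13_over_22 by auto
  define B where "B x = gumbel_exponent x ^ 2 * exp (- gumbel_exponent x)
                         + 24 * inverse (1 + x\<^sup>2) + gumbel_density x" for x
  have bound: "\<bar>x\<bar> * gumbel_density x \<le> B x" for x
  proof -
    define y where "y = x + ?g"
    have y: "gumbel_density x = exp (- y) * exp (- exp (- y))" "gumbel_exponent x = exp (- y)"
      by (simp_all add: gumbel_density_def gumbel_exponent_def y_def)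
    have "\<bar>x\<bar> * gumbel_density x \<le> (\<bar>y\<bar> + 1) * gumbel_density x"
      using g by (intro mult_right_mono gumbel_density_nonneg) (auto simp: y_def)
    also have "\<dots> \<le> gumbel_exponent x ^ 2 * exp (- gumbel_exponent x)
                     + 8 * inverse (1 + y\<^sup>2) + gumbel_density x"
      using abs_mult_standard_gumbel_density_le[of y] unfolding y distrib_right by simp
    also have "\<dots> \<le> B x"
      using inverse_1_plus_square_shift_le[OF g, of x] unfolding B_def y_def by linarith
    finally show ?thesis .
  qed
  have "integrable lborel B"
    using integrable_inverse_1_plus_square unfolding B_def[abs_def]
    by (intro Bochner_Integration.integrable_add integrable_mult_right gumbel_density_integral
        gumbel_exponent_square_integral) (simp add: set_integrable_def)
  moreover have "(\<lambda>x. gumbel_density x *\<^sub>R x) \<in> borel_measurable lborel"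
    by measurable
  moreover have "norm (gumbel_density x *\<^sub>R x) \<le> norm (B x)" for x
    using bound[of x] gumbel_density_nonneg[of x] order.trans[OF _ bound[of x]]
    by (simp add: abs_mult mult.commute)
  ultimately have "integrable lborel (\<lambda>x. gumbel_density x *\<^sub>R x)"
    by (blast intro: Bochner_Integration.integrable_bound AE_I2)
  then show ?thesis unfolding gumbel_def
    by (subst integrable_density) (auto simp: gumbel_density_nonneg)
qed

lemma gumbel_exponent_expectation:
  "integrable gumbel gumbel_exponent" "integral\<^sup>L gumbel gumbel_exponent = 1"
proof -
  have eq: "(\<lambda>x. gumbel_density x * gumbel_exponent x) =
      (\<lambda>x. gumbel_exponent x ^ 2 * exp (- gumbel_exponent x))"
    by (auto simp: gumbel_density_eq power2_eq_square)
  show "integrable gumbel gumbel_exponent" unfolding gumbel_def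
    by (subst integrable_density) (auto simp: gumbel_density_nonneg eq gumbel_exponent_square_integral)
  show "integral\<^sup>L gumbel gumbel_exponent = 1" unfolding gumbel_def
    by (subst integral_density) (auto simp: gumbel_density_nonneg eq gumbel_exponent_square_integral)
qed

definition gumbel_mean :: real where
  "gumbel_mean = integral\<^sup>L gumbel (\<lambda>x. x)"

definition gumbel_abs_mean :: real where
  "gumbel_abs_mean = integral\<^sup>L gumbel (\<lambda>x. \<bar>x\<bar>)"

text \<open>The mean is in fact \<open>0\<close>; the cheap bound from \<open>1 - t \<le> exp (- t)\<close> is all that is needed.\<close>
lemma gumbel_mean_gt_minus_1: "gumbel_mean > -1"
proof -
  interpret prob_space gumbel by (rule prob_space_gumbel)
  let ?g = "euler_mascheroni :: real"
  have "integral\<^sup>L gumbel (\<lambda>x. 1 - ?g - gumbel_exponent x) \<le> integral\<^sup>L gumbel (\<lambda>x. x)"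
  proof (rule integral_mono)
    show "integrable gumbel (\<lambda>x. 1 - ?g - gumbel_exponent x)"
      using gumbel_exponent_expectation by auto
    fix x :: real
    show "1 - ?g - gumbel_exponent x \<le> x"
      using exp_ge_add_one_self[of "- (x + ?g)"] unfolding gumbel_exponent_def by linarith
  qed (rule integrable_gumbel_id)
  moreover have "integral\<^sup>L gumbel (\<lambda>x. 1 - ?g - gumbel_exponent x) = - ?g"
    using gumbel_exponent_expectation prob_space by simp
  ultimately show ?thesis
    using euler_mascheroni_less_13_over_22 unfolding gumbel_mean_def by linarith
qed

section \<open>Expected utility and choice probabilities of a menu\<close>

lemma prob_space_noise: "prob_space (noise n)"
  unfolding noise_def by (intro prob_space_PiM prob_space_gumbel)

lemma noise_component_measurable: "i < n \<Longrightarrow> (\<lambda>e. e i) \<in> measurable (noise n) gumbel"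
  unfolding noise_def by (intro measurable_component_singleton) auto

lemma noise_component_borel_measurable: "i < n \<Longrightarrow> (\<lambda>e. e i) \<in> borel_measurable (noise n)"
  using noise_component_measurable by (simp add: measurable_def)

lemma noise_component_expectation:
  fixes f :: "real \<Rightarrow> real"
  assumes "i < n" "integrable gumbel f" "f \<in> borel_measurable borel"
  shows "integrable (noise n) (\<lambda>e. f (e i))"
    and "integral\<^sup>L (noise n) (\<lambda>e. f (e i)) = integral\<^sup>L gumbel f"
proof -
  have distr: "distr (noise n) gumbel (\<lambda>e. e i) = gumbel"
    unfolding noise_def using assms(1) by (intro distr_PiM_component prob_space_gumbel) auto
  have f: "f \<in> borel_measurable gumbel" using assms(3) by (simp add: measurable_def)
  show "integrable (noise n) (\<lambda>e. f (e i))"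
    using integrable_distr_eq[OF noise_component_measurable[OF assms(1)] f] distr assms(2) by simp
  show "integral\<^sup>L (noise n) (\<lambda>e. f (e i)) = integral\<^sup>L gumbel f"
    using integral_distr[OF noise_component_measurable[OF assms(1)] f] distr by simp
qed

lemma noise_component_mean:
  assumes "i < n"
  shows "integrable (noise n) (\<lambda>e. e i)" "integral\<^sup>L (noise n) (\<lambda>e. e i) = gumbel_mean"
    and "integrable (noise n) (\<lambda>e. \<bar>e i\<bar>)" "integral\<^sup>L (noise n) (\<lambda>e. \<bar>e i\<bar>) = gumbel_abs_mean"
  using noise_component_expectation[OF assms integrable_gumbel_id]
    noise_component_expectation[OF assms integrable_abs[OF integrable_gumbel_id]]
  unfolding gumbel_mean_def gumbel_abs_mean_def by simp_all

lemma integrable_max_utility: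
  "integrable (noise (length vs)) (\<lambda>e. Max ((\<lambda>j. vs ! j + e j) ` {..<length vs}))"
proof (cases "vs = []")
  case True
  interpret prob_space "noise 0" by (rule prob_space_noise)
  show ?thesis using True by simp
next
  case False
  let ?n = "length vs"
  interpret prob_space "noise ?n" by (rule prob_space_noise)
  let ?g = "\<lambda>e. \<Sum>j<?n. \<bar>vs ! j\<bar> + \<bar>e j\<bar>"
  have "norm (Max ((\<lambda>j. vs ! j + e j) ` {..<?n})) \<le> norm (?g e)" for e
  proof -
    have "Max ((\<lambda>j. vs ! j + e j) ` {..<?n}) \<in> (\<lambda>j. vs ! j + e j) ` {..<?n}"
      using False by (intro Max_in) auto
    then obtain j where j: "j < ?n" "Max ((\<lambda>j. vs ! j + e j) ` {..<?n}) = vs ! j + e j"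
      by auto
    have "\<bar>vs ! j + e j\<bar> \<le> \<bar>vs ! j\<bar> + \<bar>e j\<bar>" by (rule abs_triangle_ineq)
    also have "\<dots> \<le> ?g e"
      using j(1) by (intro member_le_sum[where f = "\<lambda>j. \<bar>vs ! j\<bar> + \<bar>e j\<bar>"]) auto
    finally show ?thesis using j(2) by (simp add: sum_nonneg)
  qed
  moreover have "integrable (noise ?n) ?g"
    by (rule Bochner_Integration.integrable_sum) (auto intro!: noise_component_mean)
  moreover have "(\<lambda>e. Max ((\<lambda>j. vs ! j + e j) ` {..<?n})) \<in> borel_measurable (noise ?n)"
    by (intro borel_measurable_Max borel_measurable_add noise_component_borel_measurable) auto
  ultimately show ?thesis
    by (blast intro: Bochner_Integration.integrable_bound AE_I2)
qed

lemma emax_ge: "i < length vs \<Longrightarrow> vs ! i + gumbel_mean \<le> emax vs"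
proof -
  assume i: "i < length vs"
  interpret prob_space "noise (length vs)" by (rule prob_space_noise)
  have "integral\<^sup>L (noise (length vs)) (\<lambda>e. vs ! i + e i) \<le> emax vs"
    unfolding emax_def using i
    by (intro integral_mono integrable_max_utility Bochner_Integration.integrable_add
        noise_component_mean Max_ge) auto
  then show ?thesis using noise_component_mean[OF i] by (simp add: prob_space)
qed

lemma emax_le:
  assumes "vs \<noteq> []" "\<And>v. v \<in> set vs \<Longrightarrow> v \<le> M"
  shows "emax vs \<le> M + length vs * gumbel_abs_mean"
proof -
  let ?n = "length vs"
  interpret prob_space "noise ?n" by (rule prob_space_noise)
  have "emax vs \<le> integral\<^sup>L (noise ?n) (\<lambda>e. M + (\<Sum>j<?n. \<bar>e j\<bar>))"
    unfolding emax_def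
  proof (intro integral_mono integrable_max_utility Bochner_Integration.integrable_add
      Bochner_Integration.integrable_sum noise_component_mean integrable_const)
    fix e :: "nat \<Rightarrow> real"
    have "vs ! j + e j \<le> M + (\<Sum>j<?n. \<bar>e j\<bar>)" if "j < ?n" for j
    proof -
      have "e j \<le> (\<Sum>j<?n. \<bar>e j\<bar>)"
        using that member_le_sum[of j "{..<?n}" "\<lambda>j. \<bar>e j\<bar>"] by auto
      then show ?thesis using assms(2)[of "vs ! j"] that by simp
    qed
    then show "Max ((\<lambda>j. vs ! j + e j) ` {..<?n}) \<le> M + (\<Sum>j<?n. \<bar>e j\<bar>)"
      using assms(1) by (subst Max_le_iff) auto
  qed (auto intro!: Bochner_Integration.integrable_sum noise_component_mean)
  also have "\<dots> = M + (\<Sum>j<?n. integral\<^sup>L (noise ?n) (\<lambda>e. \<bar>e j\<bar>))"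
  proof -
    have "integral\<^sup>L (noise ?n) (\<lambda>e. \<Sum>j<?n. \<bar>e j\<bar>) = (\<Sum>j<?n. integral\<^sup>L (noise ?n) (\<lambda>e. \<bar>e j\<bar>))"
      by (rule Bochner_Integration.integral_sum) (simp add: noise_component_mean)
    then show ?thesis
      by (subst Bochner_Integration.integral_add) (auto intro!: noise_component_mean simp: prob_space)
  qed
  also have "\<dots> = M + ?n * gumbel_abs_mean"
    using noise_component_mean(4) by simp
  finally show ?thesis .
qed

lemma measure_noise_PiE:
  assumes "\<And>i. i < n \<Longrightarrow> A i \<in> sets borel"
  shows "Pi\<^sub>E {..<n} A \<in> sets (noise n)"
    and "measure (noise n) (Pi\<^sub>E {..<n} A) = (\<Prod>i<n. measure gumbel (A i))"
proof -
  interpret prob_space gumbel by (rule prob_space_gumbel)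
  interpret finite_product_prob_space "\<lambda>_. gumbel" "{..<n}" by standard auto
  show "Pi\<^sub>E {..<n} A \<in> sets (noise n)"
    unfolding noise_def using assms by (intro sets_PiM_I_finite) auto
  show "measure (noise n) (Pi\<^sub>E {..<n} A) = (\<Prod>i<n. measure gumbel (A i))"
    unfolding noise_def using assms by (intro finite_measure_PiM_emb) auto
qed

lemma lessThan_3: "{..<3::nat} = {0, 1, 2}"
  by (auto simp: numeral_3_eq_3 numeral_2_eq_2 less_Suc_eq)

lemma measure_noise_box3:
  assumes "A0 \<in> sets borel" "A1 \<in> sets borel" "A2 \<in> sets borel"
  shows "Pi\<^sub>E {..<3} (\<lambda>i. [A0, A1, A2] ! i) \<in> sets (noise 3)"
    and "measure (noise 3) (Pi\<^sub>E {..<3} (\<lambda>i. [A0, A1, A2] ! i))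
           = measure gumbel A0 * measure gumbel A1 * measure gumbel A2"
proof -
  have "[A0, A1, A2] ! i \<in> sets borel" if "i < 3" for i
  proof -
    have "i \<in> {0, 1, 2}" using that lessThan_3 by blast
    then show ?thesis using assms by auto
  qed
  then show "Pi\<^sub>E {..<3} (\<lambda>i. [A0, A1, A2] ! i) \<in> sets (noise 3)"
    and "measure (noise 3) (Pi\<^sub>E {..<3} (\<lambda>i. [A0, A1, A2] ! i))
           = measure gumbel A0 * measure gumbel A1 * measure gumbel A2"
    using measure_noise_PiE[of 3 "\<lambda>i. [A0, A1, A2] ! i"] by (simp_all add: lessThan_3)
qed

lemma mem_box3:
  assumes "e \<in> Pi\<^sub>E {..<3} (\<lambda>i. [A0, A1, A2] ! i)"
  shows "e 0 \<in> A0" "e 1 \<in> A1" "e 2 \<in> A2"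
  using PiE_mem[OF assms, of 0] PiE_mem[OF assms, of 1] PiE_mem[OF assms, of 2] by simp_all

definition middle_wins :: "real \<Rightarrow> real \<Rightarrow> real \<Rightarrow> (nat \<Rightarrow> real) set" where
  "middle_wins a b c = {e \<in> space (noise 3). a + e 0 < b + e 1 \<and> c + e 2 < b + e 1}"

lemma middle_wins_sets: "middle_wins a b c \<in> sets (noise 3)"
  unfolding middle_wins_def
  by (intro sets.sets_Collect_conj borel_measurable_less borel_measurable_add
      borel_measurable_const noise_component_borel_measurable) auto

lemma choice_prob_middle: "choice_prob [a, b, c] 1 = measure (noise 3) (middle_wins a b c)"
proof -
  have length: "length [a, b, c] = 3" by simp
  have "(\<forall>k<3. P k) \<longleftrightarrow> P 0 \<and> P 1 \<and> P (2::nat)" for P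
    using lessThan_3 by (auto simp: lessThan_def set_eq_iff)
  then show ?thesis unfolding choice_prob_def middle_wins_def length by simp
qed

lemma choice_prob_nonneg: "0 \<le> choice_prob vs j"
  and choice_prob_le_1: "choice_prob vs j \<le> 1"
proof -
  interpret prob_space "noise (length vs)" by (rule prob_space_noise)
  show "0 \<le> choice_prob vs j" "choice_prob vs j \<le> 1"
    unfolding choice_prob_def by auto
qed

text \<open>The box \<open>e 0 \<ge> 0, e 1 < 0\<close> has positive probability and misses the event.\<close>
lemma choice_prob_middle_less_1:
  assumes "b \<le> a"
  shows "choice_prob [a, b, c] 1 < 1"
proof -
  interpret prob_space "noise 3" by (rule prob_space_noise)
  define B where "B = Pi\<^sub>E {..<3} (\<lambda>i. [{x::real. 0 \<le> x}, {x. x < 0}, UNIV] ! i)"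
  have box: "B \<in> sets (noise 3)"
    "measure (noise 3) B = measure gumbel {x. 0 \<le> x} * measure gumbel {x. x < 0} * measure gumbel UNIV"
    using measure_noise_box3[of "{x::real. 0 \<le> x}" "{x. x < 0}" UNIV] unfolding B_def by auto
  have False if "e \<in> middle_wins a b c" "e \<in> B" for e
  proof -
    have "a + e 0 < b + e 1" using that(1) unfolding middle_wins_def by simp
    moreover have "0 \<le> e 0" "e 1 < 0"
      using mem_box3[OF that(2)[unfolded B_def]] by auto
    ultimately show False using assms by linarith
  qed
  then have "middle_wins a b c \<inter> B = {}" by blast
  then have "measure (noise 3) (middle_wins a b c) + measure (noise 3) B \<le> 1"
    using finite_measure_Union[OF middle_wins_sets box(1)] prob_le_1 by metis
  moreover have "measure (noise 3) B > 0"
  proof -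
    have "exp (- gumbel_exponent 0) < 1" "exp (- gumbel_exponent 0) > 0"
      using gumbel_exponent_pos[of 0] by auto
    moreover have "measure gumbel UNIV = 1"
      using prob_space.prob_space[OF prob_space_gumbel] by simp
    ultimately show ?thesis
      unfolding box(2) measure_gumbel_ge measure_gumbel_less by simp
  qed
  ultimately show ?thesis unfolding choice_prob_middle by linarith
qed

lemma choice_prob_middle_ge:
  assumes "v > 0"
  shows "exp (- gumbel_exponent (v/3 - a)) * (1 - exp (- gumbel_exponent (- v/3)))
           * exp (- gumbel_exponent (v/3 - c)) \<le> choice_prob [a, v, c] 1"
proof -
  interpret prob_space "noise 3" by (rule prob_space_noise)
  define B where "B = Pi\<^sub>E {..<3} (\<lambda>i. [{x. x < v/3 - a}, {x. - v/3 \<le> x}, {x. x < v/3 - c}] ! i)"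
  have box: "B \<in> sets (noise 3)"
    "measure (noise 3) B = measure gumbel {x. x < v/3 - a} * measure gumbel {x. - v/3 \<le> x}
       * measure gumbel {x. x < v/3 - c}"
    using measure_noise_box3[of "{x. x < v/3 - a}" "{x. - v/3 \<le> x}" "{x. x < v/3 - c}"]
    unfolding B_def by auto
  have "e \<in> middle_wins a v c" if "e \<in> B" for e
  proof -
    have "e 0 < v/3 - a" "- v/3 \<le> e 1" "e 2 < v/3 - c"
      using mem_box3[OF that[unfolded B_def]] by auto
    moreover have "e \<in> space (noise 3)" using sets.sets_into_space[OF box(1)] that by blast
    ultimately show ?thesis using assms unfolding middle_wins_def by auto
  qed
  then have "measure (noise 3) B \<le> measure (noise 3) (middle_wins a v c)"
    using middle_wins_sets by (intro finite_measure_mono) auto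
  then show ?thesis
    unfolding choice_prob_middle box(2) measure_gumbel_less measure_gumbel_ge by simp
qed

lemma tendsto_choice_prob_middle: "((\<lambda>v. choice_prob [a, v, c] 1) \<longlongrightarrow> 1) at_top"
proof (rule tendsto_sandwich[where h = "\<lambda>_. 1"])
  show "\<forall>\<^sub>F v in at_top. exp (- gumbel_exponent (v/3 - a)) * (1 - exp (- gumbel_exponent (- v/3)))
          * exp (- gumbel_exponent (v/3 - c)) \<le> choice_prob [a, v, c] 1"
    using eventually_gt_at_top[of 0] by eventually_elim (rule choice_prob_middle_ge)
  show "((\<lambda>v. exp (- gumbel_exponent (v/3 - a)) * (1 - exp (- gumbel_exponent (- v/3)))
          * exp (- gumbel_exponent (v/3 - c))) \<longlongrightarrow> 1) at_top"
    unfolding gumbel_exponent_def by real_asymp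
  show "\<forall>\<^sub>F v in at_top. choice_prob [a, v, c] 1 \<le> 1"
    by (intro always_eventually allI choice_prob_le_1)
qed (rule tendsto_const)

section \<open>The exploration dynamics of PEAR\<close>

lemma rho1_pos: "0 < rho1 VP p" and rho1_less_1: "rho1 VP p < 1"
  unfolding rho1_def by (auto simp: field_simps add_pos_pos)

lemma rho2_pos: "0 < rho2 VP" and rho2_less_1: "rho2 VP < 1"
  unfolding rho2_def by (auto simp: field_simps add_pos_pos)

lemma rho2_le_rho1:
  assumes "0 < p"
  shows "rho2 VP \<le> rho1 VP p"
proof -
  have "-1 \<le> (1 - p) / p" using assms by (simp add: field_simps)
  then have "exp (-1) \<le> exp ((1 - p) / p)" by simp
  then have "exp (-1) * (1 + exp VP + exp ((1 - p) / p)) \<le> exp ((1 - p) / p) * (1 + exp VP + exp (-1))"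
    using mult_right_mono[of "exp (-1)" "exp ((1 - p) / p)" "1 + exp VP"]
    by (simp add: algebra_simps add_pos_pos)
  then show ?thesis unfolding rho1_def rho2_def by (simp add: divide_simps add_pos_pos)
qed

lemma tendsto_rho1: "((\<lambda>p. rho1 VP p) \<longlongrightarrow> 1) (at_right 0)"
  unfolding rho1_def by real_asymp

definition likelihood_ratio :: "real \<Rightarrow> real \<Rightarrow> nat \<Rightarrow> nat \<Rightarrow> real" where
  "likelihood_ratio VP p S F =
     (rho2 VP ^ S * (1 - rho2 VP) ^ F) / (rho1 VP p ^ S * (1 - rho1 VP p) ^ F)"

lemma likelihood_ratio_pos: "likelihood_ratio VP p S F > 0"
  using rho1_pos[of VP p] rho1_less_1[of VP p] rho2_pos[of VP] rho2_less_1[of VP]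
  unfolding likelihood_ratio_def by simp

lemma explores_iff_likelihood_ratio:
  assumes "0 < p" "p < 1"
  shows "explores VP p (S, F) \<longleftrightarrow> likelihood_ratio VP p S F \<le> 1"
proof -
  define R where "R = likelihood_ratio VP p S F"
  have "(1 - p) / p * R > 0" using assms likelihood_ratio_pos[of VP p S F] by (simp add: R_def)
  then have "explores VP p (S, F) \<longleftrightarrow> p * (1 + (1 - p) / p * R) \<le> 1"
    unfolding explores_def post_def R_def likelihood_ratio_def by (simp add: field_simps)
  also have "p * (1 + (1 - p) / p * R) = 1 - (1 - p) * (1 - R)"
    using assms by (simp add: field_simps)
  also have "1 - (1 - p) * (1 - R) \<le> 1 \<longleftrightarrow> R \<le> 1"
    using assms by (simp add: zero_le_mult_iff)
  finally show ?thesis unfolding R_def .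
qed

lemma explores_no_failure:
  assumes "0 < p" "p < 1"
  shows "explores VP p (S, 0)"
proof -
  have "rho2 VP ^ S \<le> rho1 VP p ^ S"
    using rho2_le_rho1[OF assms(1)] rho2_pos by (intro power_mono) (auto intro: less_imp_le)
  then show ?thesis
    using rho1_pos[of VP p] unfolding explores_iff_likelihood_ratio[OF assms] likelihood_ratio_def
    by simp
qed

text \<open>Once \<open>\<rho>\<^sub>1\<close> is this close to \<open>1\<close>, a single failure outweighs up to \<open>t\<close> successes.\<close>
lemma not_explores_after_failure:
  assumes "0 < p" "p < 1" "1 - rho1 VP p < rho2 VP ^ t * (1 - rho2 VP)"
    and "S + F \<le> t" "1 \<le> F"
  shows "\<not> explores VP p (S, F)"
proof -
  define r1 r2 where "r1 = rho1 VP p" and "r2 = rho2 VP"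
  have r: "0 < r1" "r1 < 1" "0 < r2" "r2 < 1" "r2 \<le> r1"
    using rho1_pos rho1_less_1 rho2_pos rho2_less_1 rho2_le_rho1[OF assms(1)]
    unfolding r1_def r2_def by auto
  have "r2 ^ t \<le> r2 ^ S" using r assms(4) by (intro power_decreasing) auto
  also have "\<dots> \<le> (r2 / r1) ^ S" using r by (intro power_mono) (auto simp: field_simps)
  finally have successes: "r2 ^ t \<le> (r2 / r1) ^ S" .
  have "1 \<le> (1 - r2) / (1 - r1)" using r by (simp add: field_simps)
  then have failures: "(1 - r2) / (1 - r1) \<le> ((1 - r2) / (1 - r1)) ^ F"
    using assms(5) by (metis power_increasing power_one_right)
  have "1 < r2 ^ t * ((1 - r2) / (1 - r1))"
    using assms(3) r unfolding r1_def[symmetric] r2_def[symmetric] by (simp add: field_simps)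
  also have "\<dots> \<le> (r2 / r1) ^ S * ((1 - r2) / (1 - r1)) ^ F"
    using successes failures r by (intro mult_mono) auto
  also have "\<dots> = likelihood_ratio VP p S F"
    unfolding likelihood_ratio_def r1_def r2_def by (simp add: power_divide)
  finally show ?thesis using explores_iff_likelihood_ratio[OF assms(1,2)] by simp
qed

lemma set_pmf_pear_step:
  "set_pmf (pear_step VP p v sf) \<subseteq>
     (if explores VP p sf then {(Suc (fst sf), snd sf), (fst sf, Suc (snd sf))} else {sf})"
  unfolding pear_step_def by auto

lemma pear_state_support:
  assumes "0 < p" "p < 1" "(S, F) \<in> set_pmf (pear_state VP p v t)"
  shows "S + F \<le> t" "F = 0 \<Longrightarrow> S = t"
proof -
  have "\<forall>sf \<in> set_pmf (pear_state VP p v t). fst sf + snd sf \<le> t \<and> (snd sf = 0 \<longrightarrow> fst sf = t)"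
  proof (induction t)
    case 0
    then show ?case by simp
  next
    case (Suc t)
    have "fst y + snd y \<le> Suc t \<and> (snd y = 0 \<longrightarrow> fst y = Suc t)"
      if x: "x \<in> set_pmf (pear_state VP p v t)" and y: "y \<in> set_pmf (pear_step VP p v x)" for x y
    proof -
      have IH: "fst x + snd x \<le> t" "snd x = 0 \<longrightarrow> fst x = t" using Suc.IH x by auto
      show ?thesis
      proof (cases "snd x = 0")
        case True
        then have "x = (t, 0)" using IH by (cases x) auto
        then show ?thesis
          using y set_pmf_pear_step[of VP p v x] explores_no_failure[OF assms(1,2)] by auto
      next
        case False
        then show ?thesis using y set_pmf_pear_step[of VP p v x] IH by (auto split: if_splits)
      qed
    qed
    then show ?case by auto
  qed
  then show "S + F \<le> t" "F = 0 \<Longrightarrow> S = t" using assms(3) by auto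
qed

text \<open>Without a failure PEAR always explores, so \<open>(t, 0)\<close> is reached exactly when the niche item
  was chosen at every step.\<close>
lemma pmf_pear_state_no_failure:
  assumes "0 < p" "p < 1"
  shows "pmf (pear_state VP p v t) (t, 0) = choice_prob (menu_PN VP v) 1 ^ t"
proof (induction t)
  case 0
  then show ?case by simp
next
  case (Suc t)
  let ?c = "choice_prob (menu_PN VP v) 1"
  let ?M = "pear_state VP p v t"
  have step: "pmf (pear_step VP p v x) (Suc t, 0) = ?c * indicator {(t, 0)} x"
    if x: "x \<in> set_pmf ?M" for x
  proof (cases "x = (t, 0)")
    case True
    have "(\<lambda>b. if b then (Suc (fst x), snd x) else (fst x, Suc (snd x))) -` {(Suc t, 0)} = {True}"
      using True by (auto split: if_splits)
    moreover have "pmf (bernoulli_pmf ?c) True = ?c"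
      by (rule pmf_bernoulli_True) (auto simp: choice_prob_nonneg choice_prob_le_1)
    ultimately show ?thesis
      using True explores_no_failure[OF assms] unfolding pear_step_def
      by (simp add: pmf_map measure_pmf_single del: One_nat_def)
  next
    case False
    obtain S F where SF: "x = (S, F)" by (cases x)
    have mem: "(S, F) \<in> set_pmf ?M" using x SF by simp
    have "F \<noteq> 0" using pear_state_support(2)[OF assms mem] False SF by auto
    then have "(Suc t, 0) \<notin> set_pmf (pear_step VP p v x)"
      using set_pmf_pear_step[of VP p v x] SF by (auto split: if_splits)
    then show ?thesis using False by (simp add: set_pmf_iff)
  qed
  have "pmf (pear_state VP p v (Suc t)) (Suc t, 0)
      = measure_pmf.expectation ?M (\<lambda>x. pmf (pear_step VP p v x) (Suc t, 0))"
    by (simp add: pmf_bind)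
  also have "\<dots> = measure_pmf.expectation ?M (\<lambda>x. ?c * indicator {(t, 0)} x)"
    by (intro integral_cong_AE) (auto simp: AE_measure_pmf_iff step)
  also have "\<dots> = ?c * pmf ?M (t, 0)"
    by (simp add: measure_pmf_single)
  finally show ?case using Suc.IH by simp
qed

definition explore_prob :: "real \<Rightarrow> real \<Rightarrow> real \<Rightarrow> nat \<Rightarrow> real" where
  "explore_prob VP p v t = measure_pmf.prob (pear_state VP p v t) {sf. explores VP p sf}"

lemma explore_prob_nonneg: "0 \<le> explore_prob VP p v t"
  and explore_prob_le_1: "explore_prob VP p v t \<le> 1"
  unfolding explore_prob_def by auto

lemma pear_reward_eq:
  "pear_reward VP p v t
     = emax (menu_PP VP) + (emax (menu_PN VP v) - emax (menu_PP VP)) * explore_prob VP p v t"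
proof -
  let ?M = "pear_state VP p v t" and ?E = "{sf. explores VP p sf}"
  let ?A = "emax (menu_PN VP v)" and ?B = "emax (menu_PP VP)"
  have "(\<lambda>sf. if explores VP p sf then ?A else ?B) = (\<lambda>sf. ?B + (?A - ?B) * indicator ?E sf)"
    by (auto simp: indicator_def)
  moreover have "integrable (measure_pmf ?M) (\<lambda>sf. indicator ?E sf :: real)"
    by (rule measure_pmf.integrable_const_bound[where B = 1]) auto
  ultimately show ?thesis
    unfolding pear_reward_def explore_prob_def
    by (simp add: measure_pmf.prob_space)
qed

lemma explore_prob_ge_power:
  assumes "0 < p" "p < 1"
  shows "choice_prob (menu_PN VP v) 1 ^ t \<le> explore_prob VP p v t"
proof -
  have "pmf (pear_state VP p v t) (t, 0) \<le> explore_prob VP p v t"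
    unfolding explore_prob_def measure_pmf_single[symmetric]
    using explores_no_failure[OF assms] by (intro measure_pmf.finite_measure_mono) auto
  then show ?thesis using pmf_pear_state_no_failure[OF assms] by simp
qed

lemma explore_prob_eq_power:
  assumes "0 < p" "p < 1" "1 - rho1 VP p < rho2 VP ^ t * (1 - rho2 VP)"
  shows "explore_prob VP p v t = choice_prob (menu_PN VP v) 1 ^ t"
proof -
  let ?M = "pear_state VP p v t"
  have "{sf. explores VP p sf} \<inter> set_pmf ?M = {(t, 0)} \<inter> set_pmf ?M"
  proof safe
    fix S F assume SF: "(S, F) \<in> set_pmf ?M" and "explores VP p (S, F)"
    then show "F = 0"
      using pear_state_support(1)[OF assms(1,2) SF] not_explores_after_failure[OF assms, of S F]
      by (cases F) auto
    then show "S = t" using pear_state_support(2)[OF assms(1,2) SF] by simp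
  qed (rule explores_no_failure[OF assms(1,2)])
  then have "explore_prob VP p v t = measure_pmf.prob ?M {(t, 0)}"
    unfolding explore_prob_def by (metis measure_Int_set_pmf)
  then show ?thesis using pmf_pear_state_no_failure[OF assms(1,2)] by (simp add: measure_pmf_single)
qed

section \<open>Discounted sums\<close>

lemma summable_discounted:
  fixes \<delta> :: real
  assumes "0 \<le> \<delta>" "\<delta> < 1" "\<And>t. 0 \<le> P t" "\<And>t. P t \<le> 1"
  shows "summable (\<lambda>t. \<delta> ^ t * P t)"
proof (rule summable_comparison_test[OF _ summable_geometric[of \<delta>]])
  show "\<exists>N. \<forall>t\<ge>N. norm (\<delta> ^ t * P t) \<le> \<delta> ^ t"
    using assms by (auto simp: abs_mult intro!: mult_left_le)
qed (use assms in simp)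

lemma suminf_discounted_const:
  fixes \<delta> :: real
  assumes "0 \<le> \<delta>" "\<delta> < 1"
  shows "(\<Sum>t. \<delta> ^ t * K) = K / (1 - \<delta>)"
  using suminf_mult2[OF summable_geometric[of \<delta>], of K] suminf_geometric[of \<delta>] assms by simp

lemma suminf_discounted_affine:
  fixes \<delta> :: real
  assumes "0 \<le> \<delta>" "\<delta> < 1" "\<And>t. 0 \<le> P t" "\<And>t. P t \<le> 1"
  shows "(\<Sum>t. \<delta> ^ t * (B + A * P t)) = B / (1 - \<delta>) + A * (\<Sum>t. \<delta> ^ t * P t)"
proof -
  have "(\<lambda>t. \<delta> ^ t * (B + A * P t)) = (\<lambda>t. \<delta> ^ t * B + A * (\<delta> ^ t * P t))"
    by (auto simp: algebra_simps)
  moreover have "summable (\<lambda>t. \<delta> ^ t * B)"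
    using assms by (intro summable_mult2 summable_geometric) simp
  ultimately show ?thesis
    using summable_discounted[OF assms] suminf_discounted_const[OF assms(1,2)]
    by (simp add: suminf_add[symmetric] suminf_mult)
qed

lemma discounted_ge_geometric:
  fixes \<delta> c :: real
  assumes "0 \<le> \<delta>" "\<delta> < 1" "\<And>t. 0 \<le> P t" "\<And>t. P t \<le> 1" "0 \<le> c" "c \<le> 1"
    and "\<And>t. c ^ t \<le> P t"
  shows "1 / (1 - \<delta> * c) \<le> (\<Sum>t. \<delta> ^ t * P t)"
proof -
  have "\<delta> * c < 1" using assms mult_left_le[of c \<delta>] by linarith
  then have "(\<Sum>t. (\<delta> * c) ^ t) = 1 / (1 - \<delta> * c)" "summable (\<lambda>t. (\<delta> * c) ^ t)"
    using assms by (simp_all add: suminf_geometric summable_geometric)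
  moreover have "(\<Sum>t. (\<delta> * c) ^ t) \<le> (\<Sum>t. \<delta> ^ t * P t)"
    using assms calculation(2)
    by (intro suminf_le summable_discounted) (auto simp: power_mult_distrib intro: mult_left_mono)
  ultimately show ?thesis by simp
qed

lemma discounted_le:
  fixes \<delta> :: real
  assumes "0 \<le> \<delta>" "\<delta> < 1" "\<And>t. 0 \<le> P t" "\<And>t. P t \<le> 1"
  shows "(\<Sum>t. \<delta> ^ t * P t) \<le> 1 / (1 - \<delta>)"
proof -
  have "(\<Sum>t. \<delta> ^ t * P t) \<le> (\<Sum>t. \<delta> ^ t)"
    using assms by (intro suminf_le summable_discounted summable_geometric) (auto intro: mult_left_le)
  then show ?thesis using assms suminf_geometric[of \<delta>] by simp
qed

lemma abs_discounted_tail_le: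
  fixes \<delta> :: real
  assumes "0 \<le> \<delta>" "\<delta> < 1" "\<And>t. \<bar>g t\<bar> \<le> 1"
  shows "\<bar>\<Sum>i. \<delta> ^ (i + N) * g (i + N)\<bar> \<le> \<delta> ^ N / (1 - \<delta>)"
proof -
  have bound: "\<bar>\<delta> ^ (i + N) * g (i + N)\<bar> \<le> \<delta> ^ N * \<delta> ^ i" for i
  proof -
    have "\<delta> ^ (i + N) * \<bar>g (i + N)\<bar> \<le> \<delta> ^ (i + N) * 1"
      using assms by (intro mult_left_mono) auto
    then show ?thesis using assms(1) by (simp add: abs_mult power_add mult.commute)
  qed
  have summable_bound: "summable (\<lambda>i. \<delta> ^ N * \<delta> ^ i)"
    using assms by (intro summable_mult summable_geometric) simp
  have summable_abs: "summable (\<lambda>i. \<bar>\<delta> ^ (i + N) * g (i + N)\<bar>)"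
    by (rule summable_comparison_test[OF _ summable_bound]) (use bound in auto)
  have "\<bar>\<Sum>i. \<delta> ^ (i + N) * g (i + N)\<bar> \<le> (\<Sum>i. \<bar>\<delta> ^ (i + N) * g (i + N)\<bar>)"
    by (rule summable_rabs[OF summable_abs])
  also have "\<dots> \<le> (\<Sum>i. \<delta> ^ N * \<delta> ^ i)"
    by (rule suminf_le[OF bound summable_abs summable_bound])
  also have "\<dots> = \<delta> ^ N / (1 - \<delta>)"
    using assms suminf_mult[OF summable_geometric[of \<delta>], of "\<delta> ^ N"] suminf_geometric[of \<delta>]
    by simp
  finally show ?thesis .
qed

lemma discounted_close_to_geometric:
  fixes \<delta> c :: real
  assumes "0 \<le> \<delta>" "\<delta> < 1" "\<And>t. 0 \<le> P t" "\<And>t. P t \<le> 1" "0 \<le> c" "c \<le> 1"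
    and "\<And>t. t < N \<Longrightarrow> P t = c ^ t"
  shows "\<bar>(\<Sum>t. \<delta> ^ t * P t) - 1 / (1 - \<delta> * c)\<bar> \<le> \<delta> ^ N / (1 - \<delta>)"
proof -
  have "\<delta> * c < 1" using assms mult_left_le[of c \<delta>] by linarith
  then have geo: "summable (\<lambda>t. \<delta> ^ t * c ^ t)" "(\<Sum>t. \<delta> ^ t * c ^ t) = 1 / (1 - \<delta> * c)"
    using assms by (simp_all add: suminf_geometric summable_geometric power_mult_distrib[symmetric])
  define g where "g t = P t - c ^ t" for t
  have summable_P: "summable (\<lambda>t. \<delta> ^ t * P t)" by (rule summable_discounted[OF assms(1-4)])
  then have summable_g: "summable (\<lambda>t. \<delta> ^ t * g t)"
    unfolding g_def using geo(1) by (simp add: right_diff_distrib summable_diff)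
  have "(\<Sum>t. \<delta> ^ t * P t) - 1 / (1 - \<delta> * c) = (\<Sum>t. \<delta> ^ t * g t)"
    unfolding g_def geo(2)[symmetric] using summable_P geo(1)
    by (simp add: right_diff_distrib suminf_diff)
  also have "\<dots> = (\<Sum>i. \<delta> ^ (i + N) * g (i + N))"
    using suminf_split_initial_segment[OF summable_g, of N] assms(7) by (simp add: g_def)
  moreover have "\<bar>g t\<bar> \<le> 1" for t
  proof -
    have "0 \<le> c ^ t" "c ^ t \<le> 1" using assms(5,6) by (simp_all add: power_le_one)
    then show ?thesis using assms(3,4)[of t] unfolding g_def abs_le_iff by linarith
  qed
  ultimately show ?thesis using abs_discounted_tail_le[OF assms(1,2)] by simp
qed

section \<open>Limits as the prior \<open>p\<close> of the high niche value vanishes\<close>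

lemma filterlim_high_niche_value: "filterlim (\<lambda>p::real. (1 - p) / p) at_top (at_right 0)"
  by real_asymp

lemma eventually_prior_in_01: "\<forall>\<^sub>F p in at_right 0. 0 < p \<and> p < (1::real)"
  using eventually_at_right_real[of 0 "1::real"] by simp

lemma tendsto_prior_times_value:
  fixes E :: "real \<Rightarrow> real"
  assumes "\<forall>\<^sub>F p in at_right 0. (1 - p) / p + K\<^sub>1 \<le> E p"
    and "\<forall>\<^sub>F p in at_right 0. E p \<le> (1 - p) / p + K\<^sub>2"
  shows "((\<lambda>p. p * E p) \<longlongrightarrow> 1) (at_right 0)"
proof (rule tendsto_sandwich)
  show "\<forall>\<^sub>F p in at_right 0. (1 - p) + p * K\<^sub>1 \<le> p * E p"
    using assms(1) eventually_prior_in_01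
  proof eventually_elim
    case (elim p)
    then have "p * ((1 - p) / p + K\<^sub>1) \<le> p * E p" by (intro mult_left_mono) auto
    then show ?case using elim by (simp add: distrib_left)
  qed
  show "\<forall>\<^sub>F p in at_right 0. p * E p \<le> (1 - p) + p * K\<^sub>2"
    using assms(2) eventually_prior_in_01
  proof eventually_elim
    case (elim p)
    then have "p * E p \<le> p * ((1 - p) / p + K\<^sub>2)" by (intro mult_left_mono) auto
    then show ?case using elim by (simp add: distrib_left)
  qed
  show "((\<lambda>p. (1 - p) + p * K\<^sub>1) \<longlongrightarrow> 1) (at_right 0)"
    and "((\<lambda>p. (1 - p) + p * K\<^sub>2) \<longlongrightarrow> 1) (at_right 0)"
    by (auto intro!: tendsto_eq_intros)
qed

lemma tendsto_emax_high_niche: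
  "((\<lambda>p. p * emax (menu_PN VP ((1 - p) / p))) \<longlongrightarrow> 1) (at_right 0)"
  "((\<lambda>p. p * emax (menu_NN ((1 - p) / p))) \<longlongrightarrow> 1) (at_right 0)"
proof -
  have high: "\<forall>\<^sub>F p in at_right 0. K \<le> (1 - p) / (p::real)" for K
    using filterlim_high_niche_value unfolding filterlim_at_top by blast
  show "((\<lambda>p. p * emax (menu_PN VP ((1 - p) / p))) \<longlongrightarrow> 1) (at_right 0)"
  proof (rule tendsto_prior_times_value)
    show "\<forall>\<^sub>F p in at_right 0. (1 - p) / p + gumbel_mean \<le> emax (menu_PN VP ((1 - p) / p))"
      using emax_ge[of 1 "menu_PN VP _"] by (simp add: menu_PN_def)
    show "\<forall>\<^sub>F p in at_right 0. emax (menu_PN VP ((1 - p) / p)) \<le> (1 - p) / p + 3 * gumbel_abs_mean"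
      using high[of VP] high[of 0]
      by eventually_elim (use emax_le[of "menu_PN VP _"] in \<open>auto simp: menu_PN_def\<close>)
  qed
  show "((\<lambda>p. p * emax (menu_NN ((1 - p) / p))) \<longlongrightarrow> 1) (at_right 0)"
  proof (rule tendsto_prior_times_value)
    show "\<forall>\<^sub>F p in at_right 0. (1 - p) / p + gumbel_mean \<le> emax (menu_NN ((1 - p) / p))"
      using emax_ge[of 0 "menu_NN _"] by (simp add: menu_NN_def)
    show "\<forall>\<^sub>F p in at_right 0. emax (menu_NN ((1 - p) / p)) \<le> (1 - p) / p + 3 * gumbel_abs_mean"
      using high[of 0]
      by eventually_elim (use emax_le[of "menu_NN _"] in \<open>auto simp: menu_NN_def\<close>)
  qed
qed

definition discounted_explore :: "real \<Rightarrow> real \<Rightarrow> real \<Rightarrow> real \<Rightarrow> real" where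
  "discounted_explore VP p v \<delta> = (\<Sum>t. \<delta> ^ t * explore_prob VP p v t)"

lemma tendsto_discounted_explore_high_niche:
  assumes "0 \<le> \<delta>" "\<delta> < 1"
  shows "((\<lambda>p. discounted_explore VP p ((1 - p) / p) \<delta>) \<longlongrightarrow> 1 / (1 - \<delta>)) (at_right 0)"
proof (rule tendsto_sandwich)
  let ?c = "\<lambda>p. choice_prob (menu_PN VP ((1 - p) / p)) 1"
  show "\<forall>\<^sub>F p in at_right 0. 1 / (1 - \<delta> * ?c p) \<le> discounted_explore VP p ((1 - p) / p) \<delta>"
    using eventually_prior_in_01
  proof eventually_elim
    case (elim p)
    show ?case unfolding discounted_explore_def
      by (rule discounted_ge_geometric)
        (use assms elim explore_prob_ge_power[of p] in \<open>auto simp: explore_prob_nonneg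
          explore_prob_le_1 choice_prob_nonneg choice_prob_le_1 simp del: One_nat_def\<close>)
  qed
  show "\<forall>\<^sub>F p in at_right 0. discounted_explore VP p ((1 - p) / p) \<delta> \<le> 1 / (1 - \<delta>)"
    unfolding discounted_explore_def
    by (intro always_eventually allI discounted_le assms explore_prob_nonneg explore_prob_le_1)
  have "(?c \<longlongrightarrow> 1) (at_right 0)"
    unfolding menu_PN_def
    by (rule filterlim_compose[OF tendsto_choice_prob_middle filterlim_high_niche_value])
  then show "((\<lambda>p. 1 / (1 - \<delta> * ?c p)) \<longlongrightarrow> 1 / (1 - \<delta>)) (at_right 0)"
    using assms by (auto intro!: tendsto_eq_intros)
qed simp

text \<open>For a fixed niche value, exploration after a failure eventually stops for good, so the
  exploration probability is exactly geometric on any finite horizon.\<close>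
lemma tendsto_discounted_explore_fixed_niche:
  assumes "0 \<le> \<delta>" "\<delta> < 1"
  shows "((\<lambda>p. discounted_explore VP p v \<delta>)
           \<longlongrightarrow> 1 / (1 - \<delta> * choice_prob (menu_PN VP v) 1)) (at_right 0)"
proof (rule tendstoI)
  fix \<epsilon> :: real assume "\<epsilon> > 0"
  let ?c = "choice_prob (menu_PN VP v) 1"
  have "(\<lambda>N. \<delta> ^ N / (1 - \<delta>)) \<longlonglongrightarrow> 0 / (1 - \<delta>)"
    using assms by (intro tendsto_divide LIMSEQ_power_zero tendsto_const) auto
  then have "\<forall>\<^sub>F N in sequentially. \<delta> ^ N / (1 - \<delta>) < \<epsilon>"
    using \<open>\<epsilon> > 0\<close> by (auto dest: order_tendstoD(2))
  then obtain N where N: "\<delta> ^ N / (1 - \<delta>) < \<epsilon>"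
    by (auto simp: eventually_sequentially)
  have "0 < rho2 VP ^ N * (1 - rho2 VP)" using rho2_pos rho2_less_1 by simp
  moreover have "((\<lambda>p. 1 - rho1 VP p) \<longlongrightarrow> 0) (at_right 0)"
    using tendsto_diff[OF tendsto_const tendsto_rho1, of 1 VP] by simp
  ultimately have "\<forall>\<^sub>F p in at_right 0. 1 - rho1 VP p < rho2 VP ^ N * (1 - rho2 VP)"
    by (simp add: order_tendstoD(2))
  with eventually_prior_in_01
  show "\<forall>\<^sub>F p in at_right 0. dist (discounted_explore VP p v \<delta>) (1 / (1 - \<delta> * ?c)) < \<epsilon>"
  proof eventually_elim
    case (elim p)
    have "explore_prob VP p v t = ?c ^ t" if "t < N" for t
    proof (rule explore_prob_eq_power)
      have "rho2 VP ^ N \<le> rho2 VP ^ t"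
        using rho2_pos rho2_less_1 that by (intro power_decreasing) (auto intro: less_imp_le)
      then show "1 - rho1 VP p < rho2 VP ^ t * (1 - rho2 VP)"
        using elim rho2_less_1[of VP] mult_right_mono[of "rho2 VP ^ N" "rho2 VP ^ t" "1 - rho2 VP"]
        by linarith
    qed (use elim in auto)
    then have "\<bar>discounted_explore VP p v \<delta> - 1 / (1 - \<delta> * ?c)\<bar> \<le> \<delta> ^ N / (1 - \<delta>)"
      unfolding discounted_explore_def
      by (intro discounted_close_to_geometric assms explore_prob_nonneg explore_prob_le_1
          choice_prob_nonneg choice_prob_le_1)
    then show ?case using N by (simp add: dist_real_def)
  qed
qed

lemma Util_PEAR_eq:
  fixes VP :: real
  assumes "0 \<le> \<delta>" "\<delta> < 1"
  defines "B \<equiv> emax (menu_PP VP)"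
  shows "Util_PEAR VP p \<delta>
     = p * (B / (1 - \<delta>) + (emax (menu_PN VP ((1 - p) / p)) - B)
              * discounted_explore VP p ((1 - p) / p) \<delta>)
       + (1 - p) * (B / (1 - \<delta>) + (emax (menu_PN VP (-1)) - B) * discounted_explore VP p (-1) \<delta>)"
  unfolding Util_PEAR_def pear_reward_eq discounted_explore_def B_def
  by (simp only: suminf_discounted_affine assms explore_prob_nonneg explore_prob_le_1)

lemma tendsto_Util_PEAR:
  fixes VP :: real
  assumes "0 \<le> \<delta>" "\<delta> < 1"
  defines "B \<equiv> emax (menu_PP VP)" and "L \<equiv> emax (menu_PN VP (-1))"
    and "c \<equiv> choice_prob (menu_PN VP (-1)) 1"
  shows "((\<lambda>p. Util_PEAR VP p \<delta>) \<longlongrightarrow> (1 + B) / (1 - \<delta>) + (L - B) / (1 - \<delta> * c)) (at_right 0)"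
proof -
  let ?A = "\<lambda>p. emax (menu_PN VP ((1 - p) / p))"
  let ?DH = "\<lambda>p. discounted_explore VP p ((1 - p) / p) \<delta>"
  let ?DL = "\<lambda>p. discounted_explore VP p (-1) \<delta>"
  let ?U = "\<lambda>p. p * B / (1 - \<delta>) + (p * ?A p - p * B) * ?DH p
                + (1 - p) * (B / (1 - \<delta>) + (L - B) * ?DL p)"
  have lim: "(?U \<longlongrightarrow> 0 * B / (1 - \<delta>) + (1 - 0 * B) * (1 / (1 - \<delta>))
          + (1 - 0) * (B / (1 - \<delta>) + (L - B) * (1 / (1 - \<delta> * c)))) (at_right 0)"
    unfolding c_def
    by (intro tendsto_intros tendsto_emax_high_niche tendsto_discounted_explore_high_niche
        tendsto_discounted_explore_fixed_niche assms) (use assms in auto)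
  have "?U p = Util_PEAR VP p \<delta>" for p
    by (simp add: Util_PEAR_eq assms B_def L_def algebra_simps)
  then have eq: "\<forall>\<^sub>F p in at_right 0. ?U p = Util_PEAR VP p \<delta>" by simp
  show ?thesis
    using Lim_transform_eventually[OF lim eq] by (simp add: add_divide_distrib add.assoc)
qed

lemma tendsto_Util_OPT:
  assumes "0 \<le> \<delta>" "\<delta> < 1" "-1 \<le> VP"
  shows "((\<lambda>p. Util_OPT VP p \<delta>) \<longlongrightarrow> (1 + emax (menu_PP VP)) / (1 - \<delta>)) (at_right 0)"
proof -
  let ?B = "emax (menu_PP VP)"
  let ?U = "\<lambda>p. p * emax (menu_NN ((1 - p) / p)) / (1 - \<delta>) + (1 - p) * (?B / (1 - \<delta>))"
  have lim: "(?U \<longlongrightarrow> 1 / (1 - \<delta>) + (1 - 0) * (?B / (1 - \<delta>))) (at_right 0)"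
    by (intro tendsto_intros tendsto_emax_high_niche) (use assms in auto)
  have eq: "\<forall>\<^sub>F p in at_right 0. ?U p = Util_OPT VP p \<delta>"
    using filterlim_high_niche_value[unfolded filterlim_at_top, rule_format, of "VP + 1"]
  proof eventually_elim
    case (elim p)
    then show ?case
      using assms by (simp add: Util_OPT_def opt_menu_def suminf_discounted_const)
  qed
  show ?thesis
    using Lim_transform_eventually[OF lim eq] by (simp add: add_divide_distrib)
qed

lemma tendsto_Util_ratio:
  fixes VP :: real
  assumes "0 \<le> \<delta>" "\<delta> < 1" "-1 \<le> VP" "1 + emax (menu_PP VP) \<noteq> 0"
  defines "B \<equiv> emax (menu_PP VP)" and "L \<equiv> emax (menu_PN VP (-1))"
    and "c \<equiv> choice_prob (menu_PN VP (-1)) 1"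
  shows "((\<lambda>p. Util_PEAR VP p \<delta> / Util_OPT VP p \<delta>)
           \<longlongrightarrow> ((1 + B) / (1 - \<delta>) + (L - B) / (1 - \<delta> * c)) / ((1 + B) / (1 - \<delta>))) (at_right 0)"
  using assms unfolding B_def L_def c_def
  by (intro tendsto_divide tendsto_Util_PEAR tendsto_Util_OPT) auto

lemma tendsto_discounted_ratio_at_left_1:
  fixes a b c :: real
  assumes "a \<noteq> 0" "c < 1"
  shows "((\<lambda>\<delta>. (a / (1 - \<delta>) + b / (1 - \<delta> * c)) / (a / (1 - \<delta>))) \<longlongrightarrow> 1) (at_left 1)"
proof -
  have "((\<lambda>\<delta>. 1 + b / a * ((1 - \<delta>) / (1 - \<delta> * c))) \<longlongrightarrow> 1 + b / a * ((1 - 1) / (1 - 1 * c)))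
      (at_left 1)"
    using assms by (intro tendsto_intros) auto
  moreover have "\<forall>\<^sub>F \<delta> in at_left 1. 1 + b / a * ((1 - \<delta>) / (1 - \<delta> * c))
      = (a / (1 - \<delta>) + b / (1 - \<delta> * c)) / (a / (1 - \<delta>))"
  proof (rule eventually_mono[OF eventually_at_left_real[of 0 "1::real"]])
    fix \<delta> :: real assume "\<delta> \<in> {0<..<1}"
    then have "a / (1 - \<delta>) \<noteq> 0" using assms by simp
    then have "(a / (1 - \<delta>) + b / (1 - \<delta> * c)) / (a / (1 - \<delta>))
        = 1 + b / (1 - \<delta> * c) / (a / (1 - \<delta>))"
      by (subst add_divide_distrib) simp
    also have "\<dots> = 1 + b / a * ((1 - \<delta>) / (1 - \<delta> * c))"
      by simp
    finally show "1 + b / a * ((1 - \<delta>) / (1 - \<delta> * c))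
        = (a / (1 - \<delta>) + b / (1 - \<delta> * c)) / (a / (1 - \<delta>))" ..
  qed simp
  ultimately show ?thesis using Lim_transform_eventually by fastforce
qed

theorem corollary1:
  fixes VP :: real
  assumes "VP \<ge> 0"
  shows "\<exists>L :: real \<Rightarrow> real.
           (\<forall>\<^sub>F \<delta> in at_left 1.
              ((\<lambda>p. Util_PEAR VP p \<delta> / Util_OPT VP p \<delta>) \<longlongrightarrow> L \<delta>) (at_right 0))
         \<and> (L \<longlongrightarrow> 1) (at_left 1)"
proof -
  define B where "B = emax (menu_PP VP)"
  define L where "L = emax (menu_PN VP (-1))"
  define c where "c = choice_prob (menu_PN VP (-1)) 1"
  have B: "1 + B \<noteq> 0"
    using emax_ge[of 0 "menu_PP VP"] gumbel_mean_gt_minus_1 assms by (simp add: B_def menu_PP_def)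
  have c: "c < 1"
    using choice_prob_middle_less_1[of "-1" VP 0] assms by (simp add: c_def menu_PN_def)
  show ?thesis
  proof (intro exI conjI)
    show "\<forall>\<^sub>F \<delta> in at_left 1. ((\<lambda>p. Util_PEAR VP p \<delta> / Util_OPT VP p \<delta>) \<longlongrightarrow>
        ((1 + B) / (1 - \<delta>) + (L - B) / (1 - \<delta> * c)) / ((1 + B) / (1 - \<delta>))) (at_right 0)"
    proof (rule eventually_mono[OF eventually_at_left_real[of 0 "1::real"]])
      fix \<delta> :: real assume \<delta>: "\<delta> \<in> {0<..<1}"
      show "((\<lambda>p. Util_PEAR VP p \<delta> / Util_OPT VP p \<delta>) \<longlongrightarrow>
          ((1 + B) / (1 - \<delta>) + (L - B) / (1 - \<delta> * c)) / ((1 + B) / (1 - \<delta>))) (at_right 0)"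
        unfolding B_def L_def c_def by (rule tendsto_Util_ratio) (use \<delta> B assms in \<open>auto simp: B_def\<close>)
    qed simp
    show "((\<lambda>\<delta>. ((1 + B) / (1 - \<delta>) + (L - B) / (1 - \<delta> * c)) / ((1 + B) / (1 - \<delta>))) \<longlongrightarrow> 1)
        (at_left 1)"
      using B c by (rule tendsto_discounted_ratio_at_left_1)
  qed
qed

end
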